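(* Let $V\subsetneq\mathbb{C}$ be a domain. Let $f(z)=a+\sum_{n=1}^{\infty}a_nz^n$ be an analytic function from the unit disc $\mathbb{D}$ into $V$. Assume $f$ is B-proper, that is, for almost every $\theta\in[0,2\pi)$ the limit $\lim_{r\nearrow1}f(re^{i\theta})$ exists and lies in $\partial V$. Suppose $u_V$ is a continuous function on $V$ satisfying: (i) $\Delta u_V=-4$ on $V$; (ii) $u_V$ extends continuously to $\partial V$, with $u_V=0$ on $\partial V$; (iii) there is a constant $C>0$ with $0\le u_V(w)\le C|w|^2+C$ for all $w\in V$. Then $u_V(a)=\sum_{n=1}^{\infty}|a_n|^2$. *)

theory Defs
  imports "HOL-Analysis.Analysis"
begin

text \<open>Directional (partial) derivative of a real-valued function on the complex plane
  (identified with R^2) in direction e; e = 1 gives d/dx, e = i gives d/dy.\<close>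
definition dir_deriv :: "complex \<Rightarrow> (complex \<Rightarrow> real) \<Rightarrow> complex \<Rightarrow> real" where
  "dir_deriv e u z = deriv (\<lambda>t::real. u (z + complex_of_real t * e)) 0"

definition dir_differentiable :: "complex \<Rightarrow> (complex \<Rightarrow> real) \<Rightarrow> complex \<Rightarrow> bool" where
  "dir_differentiable e u z \<longleftrightarrow> (\<lambda>t::real. u (z + complex_of_real t * e)) differentiable (at 0)"

definition C2_on :: "complex set \<Rightarrow> (complex \<Rightarrow> real) \<Rightarrow> bool" where
  "C2_on V u \<longleftrightarrow> continuous_on V u \<and>
     (\<forall>e\<in>{1, \<i>}. (\<forall>z\<in>V. dir_differentiable e u z) \<and> continuous_on V (dir_deriv e u) \<and>
        (\<forall>e'\<in>{1, \<i>}. (\<forall>z\<in>V. dir_differentiable e' (dir_deriv e u) z) \<and>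
                       continuous_on V (dir_deriv e' (dir_deriv e u))))"

definition laplacian :: "(complex \<Rightarrow> real) \<Rightarrow> complex \<Rightarrow> real" where
  "laplacian u z = dir_deriv 1 (dir_deriv 1 u) z + dir_deriv \<i> (dir_deriv \<i> u) z"

end

theory Submission
  imports Defs "HOL-Complex_Analysis.Complex_Analysis"
begin

text \<open>
  Since \<open>\<Delta>u = -4\<close>, the function \<open>u + |w|\<^sup>2\<close> is harmonic on \<open>V\<close>: its complex gradient
  \<open>u\<^sub>x - i u\<^sub>y + 2 conj w\<close> is holomorphic. Pulling back along \<open>f\<close>, the function
  \<open>u \<circ> f + |f|\<^sup>2\<close> is the real part of a holomorphic function on the disc, so its mean over
  the circle of radius \<open>r\<close> is \<open>u(a) + |a|\<^sup>2\<close>. By Parseval, the mean of \<open>|f|\<^sup>2\<close> is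
  \<open>\<Sum>\<^sub>n |a\<^sub>n|\<^sup>2 r\<^sup>2\<^sup>n\<close> (with \<open>a\<^sub>0 = a\<close>), hence the mean of \<open>u \<circ> f\<close> is
  \<open>u(a) - \<Sum>\<^sub>n\<^sub>\<ge>\<^sub>1 |a\<^sub>n|\<^sup>2 r\<^sup>2\<^sup>n\<close>.

  Since \<open>u \<ge> 0\<close>, this already gives \<open>\<Sum>\<^sub>n\<^sub>\<ge>\<^sub>1 |a\<^sub>n|\<^sup>2 \<le> u(a)\<close>, and it remains to show that
  the circle means of \<open>u \<circ> f\<close> tend to \<open>0\<close> as \<open>r \<rightarrow> 1\<close>. Split \<open>f\<close> into a polynomial, bounded
  on the disc, and a power series tail \<open>T\<close> whose \<open>L\<^sup>2\<close> norm on every circle is small. The growth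
  bound gives \<open>u \<circ> f \<le> min (u \<circ> f) K + 2C|T|\<^sup>2\<close>, and the truncated term tends to \<open>0\<close> by
  dominated convergence, because \<open>u \<circ> f\<close> tends to the boundary value \<open>0\<close> along almost every
  radius (B-properness).
\<close>

lemma dir_deriv_has_real_derivative:
  assumes "dir_differentiable e u (z + of_real t * e)"
  shows "((\<lambda>s. u (z + of_real s * e)) has_real_derivative dir_deriv e u (z + of_real t * e)) (at t)"
proof -
  define g where "g = (\<lambda>s::real. u (z + of_real t * e + of_real s * e))"
  have "(g has_real_derivative deriv g 0) (at (t + - t))"
    using assms unfolding dir_differentiable_def g_def
    by (simp add: DERIV_deriv_iff_real_differentiable)
  hence "((\<lambda>s. g (s + - t)) has_real_derivative deriv g 0) (at t)"
    by (rule DERIV_shift[THEN iffD1])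
  moreover have "(\<lambda>s. g (s + - t)) = (\<lambda>s. u (z + of_real s * e))"
    unfolding g_def by (rule ext) (simp add: algebra_simps)
  moreover have "deriv g 0 = dir_deriv e u (z + of_real t * e)"
    unfolding g_def dir_deriv_def by simp
  ultimately show ?thesis by simp
qed

lemma second_difference_mean_value:
  assumes "h > 0"
    and square: "\<And>s t. 0 \<le> s \<Longrightarrow> s \<le> h \<Longrightarrow> 0 \<le> t \<Longrightarrow> t \<le> h \<Longrightarrow> z + of_real s * e1 + of_real t * e2 \<in> S"
    and d1: "\<forall>w\<in>S. dir_differentiable e1 u w"
    and d21: "\<forall>w\<in>S. dir_differentiable e2 (dir_deriv e1 u) w"
  obtains s t where "0 < s" "s < h" "0 < t" "t < h"
    "u (z + of_real h * e1 + of_real h * e2) - u (z + of_real h * e1) - u (z + of_real h * e2) + u z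
       = h * h * dir_deriv e2 (dir_deriv e1 u) (z + of_real s * e1 + of_real t * e2)"
proof -
  define \<phi> where "\<phi> = (\<lambda>s. u (z + of_real h * e2 + of_real s * e1) - u (z + of_real s * e1))"
  define \<psi> where "\<psi> = (\<lambda>s. dir_deriv e1 u (z + of_real h * e2 + of_real s * e1) - dir_deriv e1 u (z + of_real s * e1))"
  have "\<exists>s. 0 < s \<and> s < h \<and> \<phi> h - \<phi> 0 = (h - 0) * \<psi> s"
  proof (rule MVT2[OF \<open>h > 0\<close>])
    fix s assume "0 \<le> s" "s \<le> h"
    then have "z + of_real h * e2 + of_real s * e1 \<in> S" "z + of_real s * e1 \<in> S"
      using square[of s h] square[of s 0] \<open>h > 0\<close> by (simp_all add: algebra_simps)
    then show "(\<phi> has_real_derivative \<psi> s) (at s)"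
      unfolding \<phi>_def \<psi>_def by (intro DERIV_diff dir_deriv_has_real_derivative) (use d1 in auto)
  qed
  then obtain s where s: "0 < s" "s < h" "\<phi> h - \<phi> 0 = h * \<psi> s" by auto
  define \<kappa> where "\<kappa> = (\<lambda>t. dir_deriv e1 u (z + of_real s * e1 + of_real t * e2))"
  have "\<exists>t. 0 < t \<and> t < h \<and> \<kappa> h - \<kappa> 0 = (h - 0) * dir_deriv e2 (dir_deriv e1 u) (z + of_real s * e1 + of_real t * e2)"
  proof (rule MVT2[OF \<open>h > 0\<close>])
    fix t assume "0 \<le> t" "t \<le> h"
    then have "z + of_real s * e1 + of_real t * e2 \<in> S" using square s by simp
    then show "(\<kappa> has_real_derivative dir_deriv e2 (dir_deriv e1 u) (z + of_real s * e1 + of_real t * e2)) (at t)"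
      unfolding \<kappa>_def by (intro dir_deriv_has_real_derivative) (use d21 in auto)
  qed
  then obtain t where t: "0 < t" "t < h"
    "\<kappa> h - \<kappa> 0 = h * dir_deriv e2 (dir_deriv e1 u) (z + of_real s * e1 + of_real t * e2)" by auto
  have "u (z + of_real h * e1 + of_real h * e2) - u (z + of_real h * e1) - u (z + of_real h * e2) + u z
      = \<phi> h - \<phi> 0" unfolding \<phi>_def by (simp add: algebra_simps)
  also have "\<dots> = h * (\<kappa> h - \<kappa> 0)" using s(3) unfolding \<psi>_def \<kappa>_def by (simp add: algebra_simps)
  also have "\<dots> = h * h * dir_deriv e2 (dir_deriv e1 u) (z + of_real s * e1 + of_real t * e2)"
    using t(3) by simp
  finally show ?thesis using that s t by blast
qed

lemma parallelogram_subset_ball: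
  fixes z e1 e2 :: complex
  assumes "0 \<le> s" "s \<le> h" "0 \<le> t" "t \<le> h" "h * (norm e1 + norm e2) < d"
  shows "z + of_real s * e1 + of_real t * e2 \<in> ball z d"
proof -
  have "norm (of_real s * e1 + of_real t * e2) \<le> s * norm e1 + t * norm e2"
    using norm_triangle_ineq[of "of_real s * e1" "of_real t * e2"] assms(1,3) by (simp add: norm_mult)
  also have "\<dots> \<le> h * norm e1 + h * norm e2"
    using assms(1-4) by (intro add_mono mult_right_mono) auto
  also have "\<dots> < d" using assms(5) by (simp add: algebra_simps)
  finally have "dist z (z + (of_real s * e1 + of_real t * e2)) < d"
    by (metis add_diff_cancel_left' dist_commute dist_norm)
  then show ?thesis by (simp add: add.assoc)
qed

lemma dir_deriv_commute:
  fixes u :: "complex \<Rightarrow> real"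
  assumes "open V" "z \<in> V"
    and "\<forall>w\<in>V. dir_differentiable e1 u w" "\<forall>w\<in>V. dir_differentiable e2 u w"
    and "\<forall>w\<in>V. dir_differentiable e2 (dir_deriv e1 u) w"
    and "\<forall>w\<in>V. dir_differentiable e1 (dir_deriv e2 u) w"
    and "continuous_on V (dir_deriv e2 (dir_deriv e1 u))"
    and "continuous_on V (dir_deriv e1 (dir_deriv e2 u))"
  shows "dir_deriv e2 (dir_deriv e1 u) z = dir_deriv e1 (dir_deriv e2 u) z"
proof -
  define A where "A = dir_deriv e2 (dir_deriv e1 u) z"
  define B where "B = dir_deriv e1 (dir_deriv e2 u) z"
  have "\<bar>A - B\<bar> < 2 * \<epsilon>" if "\<epsilon> > 0" for \<epsilon>
  proof -
    obtain d1 where d1: "d1 > 0" "\<forall>w\<in>V. dist w z < d1 \<longrightarrow> dist (dir_deriv e2 (dir_deriv e1 u) w) A < \<epsilon>"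
      using assms(1,2,7) \<open>\<epsilon> > 0\<close> unfolding continuous_on_iff A_def by blast
    obtain d2 where d2: "d2 > 0" "\<forall>w\<in>V. dist w z < d2 \<longrightarrow> dist (dir_deriv e1 (dir_deriv e2 u) w) B < \<epsilon>"
      using assms(1,2,8) \<open>\<epsilon> > 0\<close> unfolding continuous_on_iff B_def by blast
    obtain d3 where d3: "d3 > 0" "ball z d3 \<subseteq> V" using assms(1,2) open_contains_ball by blast
    define d where "d = min d1 (min d2 d3)"
    define h where "h = d / (norm e1 + norm e2 + 1)"
    have "d > 0" "h > 0" using d1 d2 d3 by (simp_all add: d_def h_def add_nonneg_pos)
    have "h * (norm e1 + norm e2) < h * (norm e1 + norm e2 + 1)" using \<open>h > 0\<close> by simp
    also have "\<dots> = d" using add_nonneg_pos[of "norm e1 + norm e2" 1] by (simp add: h_def)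
    finally have small: "h * (norm e1 + norm e2) < d" .
    define S where "S = V \<inter> ball z d"
    have square: "z + of_real s * e1 + of_real t * e2 \<in> S" if "0 \<le> s" "s \<le> h" "0 \<le> t" "t \<le> h" for s t
      using parallelogram_subset_ball[OF that small] d3 by (auto simp: S_def d_def)
    have square': "z + of_real t * e2 + of_real s * e1 \<in> S" if "0 \<le> t" "t \<le> h" "0 \<le> s" "s \<le> h" for s t
      using square[OF that(3,4,1,2)] by (simp add: add_ac)
    obtain s1 t1 where st1: "0 < s1" "s1 < h" "0 < t1" "t1 < h"
      "u (z + of_real h * e1 + of_real h * e2) - u (z + of_real h * e1) - u (z + of_real h * e2) + u z
         = h * h * dir_deriv e2 (dir_deriv e1 u) (z + of_real s1 * e1 + of_real t1 * e2)"
      by (rule second_difference_mean_value[OF \<open>h > 0\<close> square]) (use assms(3,5) in \<open>auto simp: S_def\<close>)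
    obtain t2 s2 where st2: "0 < t2" "t2 < h" "0 < s2" "s2 < h"
      "u (z + of_real h * e2 + of_real h * e1) - u (z + of_real h * e2) - u (z + of_real h * e1) + u z
         = h * h * dir_deriv e1 (dir_deriv e2 u) (z + of_real t2 * e2 + of_real s2 * e1)"
      by (rule second_difference_mean_value[OF \<open>h > 0\<close> square']) (use assms(4,6) in \<open>auto simp: S_def\<close>)
    define w1 where "w1 = z + of_real s1 * e1 + of_real t1 * e2"
    define w2 where "w2 = z + of_real t2 * e2 + of_real s2 * e1"
    have "w1 \<in> S" "w2 \<in> S" using square st1 square' st2 by (auto simp: w1_def w2_def)
    then have "\<bar>dir_deriv e2 (dir_deriv e1 u) w1 - A\<bar> < \<epsilon>" "\<bar>dir_deriv e1 (dir_deriv e2 u) w2 - B\<bar> < \<epsilon>"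
      using d1(2) d2(2) by (auto simp: S_def d_def dist_commute dist_real_def)
    moreover have "dir_deriv e2 (dir_deriv e1 u) w1 = dir_deriv e1 (dir_deriv e2 u) w2"
      using st1(5) st2(5) \<open>h > 0\<close> by (simp add: w1_def w2_def algebra_simps)
    ultimately show ?thesis by (simp add: abs_less_iff)
  qed
  from this[of "\<bar>A - B\<bar> / 2"] have "A = B" by fastforce
  then show ?thesis by (simp add: A_def B_def)
qed

lemma has_real_derivative_Complex_partials:
  fixes u :: "complex \<Rightarrow> real"
  shows "dir_differentiable 1 u (Complex x y) \<Longrightarrow>
      ((\<lambda>s. u (Complex s y)) has_real_derivative dir_deriv 1 u (Complex x y)) (at x)"
    and "dir_differentiable \<i> u (Complex x y) \<Longrightarrow>
      ((\<lambda>t. u (Complex x t)) has_real_derivative dir_deriv \<i> u (Complex x y)) (at y)"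
proof -
  have alt1: "Complex s t = of_real t * \<i> + of_real s * 1" for s t by (simp add: complex_eq_iff)
  have alt2: "Complex s t = of_real s + of_real t * \<i>" for s t by (simp add: complex_eq_iff)
  show "((\<lambda>s. u (Complex s y)) has_real_derivative dir_deriv 1 u (Complex x y)) (at x)"
    if "dir_differentiable 1 u (Complex x y)"
    using that dir_deriv_has_real_derivative[of 1 u "of_real y * \<i>" x] by (simp only: alt1)
  show "((\<lambda>t. u (Complex x t)) has_real_derivative dir_deriv \<i> u (Complex x y)) (at y)"
    if "dir_differentiable \<i> u (Complex x y)"
    using that dir_deriv_has_real_derivative[of \<i> u "of_real x" y] by (simp only: alt2)
qed

lemma continuous_blinfun_scaleR_left_Complex:
  assumes "isCont \<phi> (Complex x y)"
  shows "continuous (at (x, y) within A) (\<lambda>(x, y). blinfun_scaleR_left (\<phi> (Complex x y)))"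
proof -
  have "isCont (\<lambda>p. Complex (fst p) (snd p)) (x, y)"
    unfolding isCont_def by (intro tendsto_Complex tendsto_fst tendsto_snd tendsto_ident_at)
  moreover have "isCont \<phi> (Complex (fst (x, y)) (snd (x, y)))" using assms by simp
  ultimately have "isCont (\<lambda>p. \<phi> (Complex (fst p) (snd p))) (x, y)"
    by (rule isCont_o2)
  then have "isCont (\<lambda>p. blinfun_scaleR_left (\<phi> (Complex (fst p) (snd p)))) (x, y)"
    by (rule bounded_linear.isCont[OF bounded_linear_blinfun_scaleR_left])
  moreover have "(\<lambda>(x, y). blinfun_scaleR_left (\<phi> (Complex x y)))
      = (\<lambda>p. blinfun_scaleR_left (\<phi> (Complex (fst p) (snd p))))"
    by (auto simp: fun_eq_iff)
  ultimately show ?thesis using continuous_at_imp_continuous_at_within by metis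
qed

lemma has_derivative_of_partials:
  fixes u :: "complex \<Rightarrow> real"
  assumes "open V" "z \<in> V"
    and dx: "\<forall>w\<in>V. dir_differentiable 1 u w" and dy: "\<forall>w\<in>V. dir_differentiable \<i> u w"
    and cy: "continuous_on V (dir_deriv \<i> u)"
  shows "(u has_derivative (\<lambda>k. dir_deriv 1 u z * Re k + dir_deriv \<i> u z * Im k)) (at z)"
proof -
  obtain d where d: "d > 0" "ball z d \<subseteq> V" using assms(1,2) open_contains_ball by blast
  define X where "X = ball (Re z) (d/2)"
  define Y where "Y = ball (Im z) (d/2)"
  define g where "g = (\<lambda>x y. u (Complex x y))"
  have in_V: "Complex x y \<in> V" if "x \<in> X" "y \<in> Y" for x y
  proof -
    have "dist z (Complex x y) \<le> dist (Re z) x + dist (Im z) y"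
      by (simp add: dist_norm cmod_def real_sqrt_sum_squares_triangle_ineq sqrt_sum_squares_le_sum_abs)
    also have "\<dots> < d" using that by (simp add: X_def Y_def)
    finally show ?thesis using d by auto
  qed
  have "((\<lambda>x. g x (Im z)) has_real_derivative dir_deriv 1 u z) (at (Re z))"
    using has_real_derivative_Complex_partials(1)[of u "Re z" "Im z"] dx assms(2) by (simp add: g_def)
  then have gx: "((\<lambda>x. g x (Im z)) has_derivative (*) (dir_deriv 1 u z)) (at (Re z) within X)"
    unfolding has_field_derivative_def by (rule has_derivative_at_withinI)
  have gy: "((\<lambda>y. g x y) has_derivative blinfun_apply (blinfun_scaleR_left (dir_deriv \<i> u (Complex x y))))
      (at y within Y)" if "x \<in> X" "y \<in> Y" for x y
  proof -
    have "((\<lambda>y. g x y) has_real_derivative dir_deriv \<i> u (Complex x y)) (at y)"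
      using has_real_derivative_Complex_partials(2)[of u x y] dy in_V[OF that] by (simp add: g_def)
    moreover have "blinfun_apply (blinfun_scaleR_left (dir_deriv \<i> u (Complex x y))) = (*) (dir_deriv \<i> u (Complex x y))"
      by (auto simp: fun_eq_iff)
    ultimately show ?thesis
      unfolding has_field_derivative_def by (metis has_derivative_at_withinI)
  qed
  have "isCont (dir_deriv \<i> u) (Complex (Re z) (Im z))"
    using cy assms(1,2) continuous_on_eq_continuous_at by fastforce
  from has_derivative_partialsI[OF gx gy continuous_blinfun_scaleR_left_Complex[OF this]]
  have "((\<lambda>(x, y). g x y) has_derivative
      (\<lambda>(tx, ty). dir_deriv 1 u z * tx + blinfun_scaleR_left (dir_deriv \<i> u (Complex (Re z) (Im z))) ty))
      (at (Re z, Im z) within X \<times> Y)"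
    by (auto simp: Y_def d)
  moreover have "at (Re z, Im z) within X \<times> Y = at (Re z, Im z)"
    by (rule at_within_open) (auto simp: X_def Y_def d open_Times)
  ultimately have g_deriv: "((\<lambda>(x, y). g x y) has_derivative
      (\<lambda>(tx, ty). dir_deriv 1 u z * tx + dir_deriv \<i> u z * ty)) (at (Re z, Im z))"
    by (simp add: mult.commute)
  have "((\<lambda>w. (Re w, Im w)) has_derivative (\<lambda>w. (Re w, Im w))) (at z)"
    by (intro has_derivative_Pair has_derivative_Re has_derivative_Im has_derivative_ident)
  from diff_chain_at[OF this g_deriv]
  show ?thesis by (simp add: g_def o_def)
qed

definition complex_gradient :: "(complex \<Rightarrow> real) \<Rightarrow> complex \<Rightarrow> complex" where
  "complex_gradient u w = of_real (dir_deriv 1 u w) - \<i> * of_real (dir_deriv \<i> u w)"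

lemma has_derivative_complex_gradient:
  fixes u :: "complex \<Rightarrow> real"
  assumes "open V" "w \<in> V"
    and "\<forall>w\<in>V. dir_differentiable 1 u w" "\<forall>w\<in>V. dir_differentiable \<i> u w"
    and "continuous_on V (dir_deriv \<i> u)"
  shows "(u has_derivative (\<lambda>k. Re (complex_gradient u w * k))) (at w)"
  using has_derivative_of_partials[OF assms] by (simp add: complex_gradient_def)

lemma has_derivative_norm_power2:
  "((\<lambda>w. (cmod w)\<^sup>2) has_derivative (\<lambda>k. Re (2 * cnj w * k))) (at w)"
proof -
  have "((\<lambda>w. Re w * Re w + Im w * Im w) has_derivative
      (\<lambda>k. Re w * Re k + Re k * Re w + (Im w * Im k + Im k * Im w))) (at w)"
    by (intro derivative_eq_intros has_derivative_Re has_derivative_Im has_derivative_ident) auto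
  then show ?thesis
    by (simp add: cmod_power2 algebra_simps flip: power2_eq_square)
qed

lemma complex_gradient_holomorphic:
  fixes u :: "complex \<Rightarrow> real"
  assumes "open V" and C2: "C2_on V u" and lap: "\<And>w. w \<in> V \<Longrightarrow> laplacian u w = -4"
  shows "(\<lambda>w. complex_gradient u w + 2 * cnj w) holomorphic_on V"
proof -
  define ux where "ux = dir_deriv 1 u"
  define uy where "uy = dir_deriv \<i> u"
  have c2: "\<forall>w\<in>V. dir_differentiable 1 ux w" "\<forall>w\<in>V. dir_differentiable \<i> ux w"
    "\<forall>w\<in>V. dir_differentiable 1 uy w" "\<forall>w\<in>V. dir_differentiable \<i> uy w"
    "continuous_on V (dir_deriv \<i> ux)" "continuous_on V (dir_deriv \<i> uy)"
    using C2 unfolding C2_on_def ux_def uy_def by auto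
  have "((\<lambda>w. complex_gradient u w + 2 * cnj w) has_field_derivative
      of_real (dir_deriv 1 ux w + 2) - \<i> * of_real (dir_deriv 1 uy w)) (at w)" if "w \<in> V" for w
  proof -
    have sym: "dir_deriv \<i> ux w = dir_deriv 1 uy w"
      unfolding ux_def uy_def by (rule dir_deriv_commute[OF \<open>open V\<close> that]) (use C2 in \<open>auto simp: C2_on_def\<close>)
    have lap_w: "dir_deriv \<i> uy w = -4 - dir_deriv 1 ux w"
      using lap[OF that] by (simp add: laplacian_def ux_def uy_def)
    have "((\<lambda>w. of_real (ux w) - \<i> * of_real (uy w) + 2 * cnj w) has_derivative
        (\<lambda>k. of_real (dir_deriv 1 ux w * Re k + dir_deriv \<i> ux w * Im k)
          - \<i> * of_real (dir_deriv 1 uy w * Re k + dir_deriv \<i> uy w * Im k) + 2 * cnj k)) (at w)"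
      by (intro derivative_intros has_derivative_of_partials[OF \<open>open V\<close> that]) (use c2 in auto)
    moreover have "(\<lambda>k. of_real (dir_deriv 1 ux w * Re k + dir_deriv \<i> ux w * Im k)
          - \<i> * of_real (dir_deriv 1 uy w * Re k + dir_deriv \<i> uy w * Im k) + 2 * cnj k)
        = (*) (of_real (dir_deriv 1 ux w + 2) - \<i> * of_real (dir_deriv 1 uy w))"
      by (auto simp: sym lap_w fun_eq_iff complex_eq_iff algebra_simps)
    ultimately show ?thesis
      unfolding has_field_derivative_def by (simp add: complex_gradient_def ux_def uy_def)
  qed
  then show ?thesis
    using \<open>open V\<close> by (auto simp: holomorphic_on_def field_differentiable_def at_within_open[OF _ \<open>open V\<close>]
        intro: has_field_derivative_at_within)
qed

text \<open>If the real differential of \<open>v\<close> is given by a holomorphic function \<open>g\<close>, then \<open>v \<circ> f\<close> is the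
  real part of a primitive of \<open>(g \<circ> f) f'\<close>.\<close>
lemma exists_holomorphic_real_part_compose:
  assumes "convex S" "open S" "f holomorphic_on S" "f ` S \<subseteq> V" "g holomorphic_on V"
    and v: "\<And>w. w \<in> V \<Longrightarrow> (v has_derivative (\<lambda>k. Re (g w * k))) (at w)"
  obtains G k where "G holomorphic_on S" "\<And>z. z \<in> S \<Longrightarrow> v (f z) = Re (G z) + k"
proof -
  have "(\<lambda>z. g (f z) * deriv f z) holomorphic_on S"
    using holomorphic_on_compose_gen[OF assms(3,5,4)] holomorphic_deriv[OF assms(3,2)]
    unfolding o_def by (rule holomorphic_on_mult)
  then obtain G where G_within: "\<And>z. z \<in> S \<Longrightarrow> (G has_field_derivative g (f z) * deriv f z) (at z within S)"
    using holomorphic_convex_primitive'[OF assms(1,2)] by blast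
  have G: "(G has_field_derivative g (f z) * deriv f z) (at z)" if "z \<in> S" for z
    using G_within[OF that] at_within_open[OF that assms(2)] by simp
  have "G holomorphic_on S"
    unfolding holomorphic_on_def field_differentiable_def using G_within by blast
  moreover have "\<exists>k. \<forall>z\<in>S. Re (G z) - v (f z) = k"
  proof (rule has_derivative_zero_constant[OF \<open>convex S\<close>])
    fix z assume "z \<in> S"
    have "(f has_derivative (*) (deriv f z)) (at z)"
      using holomorphic_derivI[OF assms(3,2) \<open>z \<in> S\<close>, of UNIV] by (simp add: has_field_derivative_def)
    from has_derivative_compose[OF this v] have
      "((\<lambda>z. v (f z)) has_derivative (\<lambda>k. Re (g (f z) * (deriv f z * k)))) (at z)"
      using assms(4) \<open>z \<in> S\<close> by blast
    moreover have "((\<lambda>z. Re (G z)) has_derivative (\<lambda>k. Re (g (f z) * deriv f z * k))) (at z)"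
      using has_derivative_Re[OF G[OF \<open>z \<in> S\<close>, unfolded has_field_derivative_def]] by simp
    ultimately have "((\<lambda>z. Re (G z) - v (f z)) has_derivative
        (\<lambda>k. Re (g (f z) * deriv f z * k) - Re (g (f z) * (deriv f z * k)))) (at z)"
      by (intro has_derivative_diff)
    then show "((\<lambda>z. Re (G z) - v (f z)) has_derivative (\<lambda>k. 0)) (at z within S)"
      by (simp add: mult.assoc has_derivative_at_withinI)
  qed
  then obtain k where "\<forall>z\<in>S. Re (G z) - v (f z) = k" by blast
  then have "v (f z) = Re (G z) + - k" if "z \<in> S" for z using that by fastforce
  ultimately show thesis by (rule that)
qed

lemma exists_holomorphic_real_part_plus_norm_power2:
  fixes u :: "complex \<Rightarrow> real"
  assumes "convex S" "open S" "f holomorphic_on S" "f ` S \<subseteq> V"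
    and "open V" "C2_on V u" "\<And>w. w \<in> V \<Longrightarrow> laplacian u w = -4"
  obtains G k where "G holomorphic_on S" "\<And>z. z \<in> S \<Longrightarrow> u (f z) + (cmod (f z))\<^sup>2 = Re (G z) + k"
proof -
  have "((\<lambda>w. u w + (cmod w)\<^sup>2) has_derivative (\<lambda>k. Re ((complex_gradient u w + 2 * cnj w) * k))) (at w)"
    if "w \<in> V" for w
  proof -
    have "(u has_derivative (\<lambda>k. Re (complex_gradient u w * k))) (at w)"
      using assms(5,6) that by (intro has_derivative_complex_gradient) (auto simp: C2_on_def)
    from has_derivative_add[OF this has_derivative_norm_power2] show ?thesis
      by (simp add: distrib_right)
  qed
  then show thesis
    using exists_holomorphic_real_part_compose[OF assms(1-4) complex_gradient_holomorphic[OF assms(5-7)]] that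
    by blast
qed

lemma holomorphic_circle_mean:
  assumes "G holomorphic_on cball 0 r" "0 \<le> r"
  shows "((\<lambda>\<theta>. G (of_real r * cis \<theta>)) has_integral of_real (2 * pi) * G 0) {0..2*pi}"
proof (cases "r = 0")
  case True
  then show ?thesis using has_integral_const_real[of "G 0" 0 "2 * pi"] by (simp add: scaleR_conv_of_real)
next
  case False
  then have "r > 0" using assms(2) by simp
  have "((\<lambda>w. G w / (w - 0)) has_contour_integral 2 * of_real pi * \<i> * G 0) (circlepath 0 r)"
    using Cauchy_integral_circlepath_simple[OF assms(1), of 0] \<open>r > 0\<close> by simp
  moreover have "2 * of_real pi * \<i> * G 0 = \<i> * (of_real (2 * pi) * G 0)" by (simp add: mult_ac)
  ultimately have "((\<lambda>\<theta>. G (of_real r * cis \<theta>) / (of_real r * cis \<theta>) * of_real r * \<i> * cis \<theta>)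
      has_integral \<i> * (of_real (2 * pi) * G 0)) {0..2*pi}"
    by (simp add: circlepath_def has_contour_integral_part_circlepath_iff)
  then have "((\<lambda>\<theta>. - \<i> * (G (of_real r * cis \<theta>) / (of_real r * cis \<theta>) * of_real r * \<i> * cis \<theta>))
      has_integral - \<i> * (\<i> * (of_real (2 * pi) * G 0))) {0..2*pi}"
    by (rule has_integral_mult_right)
  moreover have "- \<i> * (G (of_real r * cis \<theta>) / (of_real r * cis \<theta>) * of_real r * \<i> * cis \<theta>)
      = G (of_real r * cis \<theta>)" for \<theta>
    using \<open>r > 0\<close> by (simp add: field_simps)
  ultimately show ?thesis by simp
qed

lemma has_integral_cis_int:
  fixes m :: int
  shows "((\<lambda>\<theta>. cis (of_int m * \<theta>)) has_integral (if m = 0 then of_real (2 * pi) else 0)) {0..2*pi}"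
proof (cases "m = 0")
  case True
  then show ?thesis using has_integral_const_real[of "1::complex" 0 "2*pi"] by (simp add: scaleR_conv_of_real)
next
  case False
  define E where "E = (\<lambda>z::complex. exp (\<i> * of_int m * z) / (\<i> * of_int m))"
  have E: "(E has_field_derivative exp (\<i> * of_int m * z)) (at z)" for z
    unfolding E_def using False by (auto intro!: derivative_eq_intros simp: field_simps)
  have "((\<lambda>x. exp (\<i> * of_int m * complex_of_real x)) has_integral (E (of_real (2 * pi)) - E (of_real 0))) {0..2*pi}"
    by (rule fundamental_theorem_of_calculus) (auto intro: has_vector_derivative_real_field[OF E])
  moreover have "exp (\<i> * of_int m * complex_of_real (2 * pi)) = 1"
    using exp_integer_2pi[of "of_int m"] by (simp add: mult_ac)
  then have "E (of_real (2 * pi)) - E (of_real 0) = 0" by (simp add: E_def)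
  moreover have "exp (\<i> * of_int m * complex_of_real x) = cis (of_int m * x)" for x
    by (simp add: cis_conv_exp mult_ac)
  ultimately show ?thesis using False by simp
qed

lemma power_of_real_cis: "(complex_of_real r * cis \<theta>) ^ n = of_real (r ^ n) * cis (of_int (int n) * \<theta>)"
  by (simp add: power_mult_distrib Complex.DeMoivre)

lemma norm_power2_polynomial_circle:
  fixes a :: "nat \<Rightarrow> complex"
  shows "complex_of_real ((cmod (\<Sum>n<N. a n * (of_real r * cis \<theta>) ^ n))\<^sup>2)
    = (\<Sum>m<N. \<Sum>n<N. a m * cnj (a n) * of_real (r ^ m * r ^ n) * cis (of_int (int m - int n) * \<theta>))"
proof -
  have "cis (of_int (int m) * \<theta>) * cnj (cis (of_int (int n) * \<theta>)) = cis (of_int (int m - int n) * \<theta>)"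
    for m n by (simp add: cis_cnj cis_mult algebra_simps)
  then have cross_term: "a m * (of_real r * cis \<theta>) ^ m * cnj (a n * (of_real r * cis \<theta>) ^ n)
      = a m * cnj (a n) * of_real (r ^ m * r ^ n) * cis (of_int (int m - int n) * \<theta>)" for m n
    unfolding power_of_real_cis by (simp add: mult_ac)
  have "of_real ((cmod (\<Sum>n<N. a n * (of_real r * cis \<theta>) ^ n))\<^sup>2)
     = (\<Sum>m<N. a m * (of_real r * cis \<theta>) ^ m) * cnj (\<Sum>n<N. a n * (of_real r * cis \<theta>) ^ n)"
    by (rule complex_norm_square)
  also have "\<dots> = (\<Sum>m<N. \<Sum>n<N. a m * (of_real r * cis \<theta>) ^ m * cnj (a n * (of_real r * cis \<theta>) ^ n))"
    by (simp add: sum_distrib_left sum_distrib_right cnj_sum) (rule sum.swap)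
  finally show ?thesis by (simp only: cross_term)
qed

lemma polynomial_circle_parseval:
  fixes a :: "nat \<Rightarrow> complex"
  shows "((\<lambda>\<theta>. (cmod (\<Sum>n<N. a n * (of_real r * cis \<theta>) ^ n))\<^sup>2) has_integral
     2 * pi * (\<Sum>n<N. (cmod (a n))\<^sup>2 * r ^ (2 * n))) {0..2*pi}"
proof -
  have orth: "(\<Sum>n<N. a m * cnj (a n) * of_real (r ^ m * r ^ n) * (if int m - int n = 0 then of_real (2 * pi) else 0))
      = of_real (2 * pi * ((cmod (a m))\<^sup>2 * r ^ (2 * m)))" if "m < N" for m
  proof -
    have "(\<Sum>n<N. a m * cnj (a n) * of_real (r ^ m * r ^ n) * (if int m - int n = 0 then of_real (2 * pi) else 0))
        = a m * cnj (a m) * of_real (r ^ m * r ^ m) * of_real (2 * pi)"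
      using that by (subst sum.mono_neutral_cong_right[where S="{m}"]) auto
    also have "\<dots> = of_real ((cmod (a m))\<^sup>2) * of_real (r ^ (2 * m)) * of_real (2 * pi)"
      by (simp only: complex_norm_square power_mult_distrib mult_2 power_add of_real_mult)
    also have "\<dots> = of_real (2 * pi * ((cmod (a m))\<^sup>2 * r ^ (2 * m)))"
      by (simp only: of_real_mult mult_ac)
    finally show ?thesis .
  qed
  have "((\<lambda>\<theta>. \<Sum>m<N. \<Sum>n<N. a m * cnj (a n) * of_real (r ^ m * r ^ n) * cis (of_int (int m - int n) * \<theta>))
      has_integral (\<Sum>m<N. \<Sum>n<N. a m * cnj (a n) * of_real (r ^ m * r ^ n) *
        (if int m - int n = 0 then of_real (2 * pi) else 0))) {0..2*pi}"
    by (intro has_integral_sum finite_lessThan has_integral_mult_right has_integral_cis_int)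
  also have "(\<Sum>m<N. \<Sum>n<N. a m * cnj (a n) * of_real (r ^ m * r ^ n) *
        (if int m - int n = 0 then of_real (2 * pi) else 0))
      = (\<Sum>m<N. complex_of_real (2 * pi * ((cmod (a m))\<^sup>2 * r ^ (2 * m))))"
    by (intro sum.cong refl orth) simp
  also have "\<dots> = complex_of_real (2 * pi * (\<Sum>n<N. (cmod (a n))\<^sup>2 * r ^ (2 * n)))"
    by (simp add: sum_distrib_left)
  finally have "((\<lambda>\<theta>. complex_of_real ((cmod (\<Sum>n<N. a n * (of_real r * cis \<theta>) ^ n))\<^sup>2)) has_integral
      complex_of_real (2 * pi * (\<Sum>n<N. (cmod (a n))\<^sup>2 * r ^ (2 * n)))) {0..2*pi}"
    by (simp only: norm_power2_polynomial_circle)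
  from has_integral_Re[OF this] show ?thesis by simp
qed

lemma summable_norm_power_series_disc:
  fixes a :: "nat \<Rightarrow> complex"
  assumes "\<And>z. z \<in> ball 0 1 \<Longrightarrow> (\<lambda>n. a n * z ^ n) sums F z" "0 \<le> r" "r < 1"
  shows "summable (\<lambda>n. norm (a n) * r ^ n)"
proof -
  define s where "s = (1 + r) / 2"
  have "r < s" "s < 1" using assms(3) by (simp_all add: s_def)
  then have "summable (\<lambda>n. a n * (of_real s) ^ n)"
    using assms(1)[of "of_real s"] assms(2) by (auto simp: sums_iff)
  then have "summable (\<lambda>n. norm (a n * (of_real r) ^ n))"
    by (rule powser_insidea) (use assms(2) \<open>r < s\<close> in auto)
  then show ?thesis using assms(2) by (simp add: norm_mult norm_power)
qed

lemma uniform_limit_norm_power2_power_series_circle: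
  fixes a :: "nat \<Rightarrow> complex"
  assumes "0 \<le> r" and summable: "summable (\<lambda>n. norm (a n) * r ^ n)"
  shows "uniform_limit A (\<lambda>N \<theta>. (cmod (\<Sum>n<N. a n * (of_real r * cis \<theta>) ^ n))\<^sup>2)
    (\<lambda>\<theta>. (cmod (\<Sum>n. a n * (of_real r * cis \<theta>) ^ n))\<^sup>2) sequentially"
proof -
  define S where "S = (\<lambda>N \<theta>. \<Sum>n<N. a n * (of_real r * cis \<theta>) ^ n)"
  define F where "F = (\<lambda>\<theta>. \<Sum>n. a n * (of_real r * cis \<theta>) ^ n)"
  have norm_term: "norm (a n * (of_real r * cis \<theta>) ^ n) = norm (a n) * r ^ n" for n \<theta>
    using assms(1) by (simp add: norm_mult norm_power)
  have "uniform_limit A S F sequentially"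
    unfolding S_def F_def by (rule Weierstrass_m_test[OF _ summable]) (simp add: norm_term)
  moreover have "norm (F \<theta>) \<le> (\<Sum>n. norm (a n) * r ^ n)" for \<theta>
    unfolding F_def by (rule norm_suminf_le[OF _ summable]) (simp add: norm_term)
  then have "bounded ((\<lambda>\<theta>. norm (F \<theta>)) ` A)"
    by (auto simp: bounded_iff)
  ultimately have "uniform_limit A (\<lambda>N \<theta>. norm (S N \<theta>) * norm (S N \<theta>)) (\<lambda>\<theta>. norm (F \<theta>) * norm (F \<theta>))
      sequentially"
    by (intro uniform_lim_mult uniform_limit_norm)
  then show ?thesis by (simp add: S_def F_def power2_eq_square)
qed

lemma power_series_circle_parseval:
  fixes a :: "nat \<Rightarrow> complex"
  assumes "0 \<le> r" and summable: "summable (\<lambda>n. norm (a n) * r ^ n)"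
  shows "summable (\<lambda>n. (cmod (a n))\<^sup>2 * r ^ (2 * n))"
    and "((\<lambda>\<theta>. (cmod (\<Sum>n. a n * (of_real r * cis \<theta>) ^ n))\<^sup>2) has_integral
          2 * pi * (\<Sum>n. (cmod (a n))\<^sup>2 * r ^ (2 * n))) {0..2*pi}"
proof -
  have "continuous_on {0..2*pi} (\<lambda>\<theta>. (cmod (\<Sum>n<N. a n * (of_real r * cis \<theta>) ^ n))\<^sup>2)" for N
    by (intro continuous_intros)
  with uniform_limit_norm_power2_power_series_circle[OF assms]
  obtain I J where I: "\<And>N. ((\<lambda>\<theta>. (cmod (\<Sum>n<N. a n * (of_real r * cis \<theta>) ^ n))\<^sup>2) has_integral I N) {0..2*pi}"
    and J: "((\<lambda>\<theta>. (cmod (\<Sum>n. a n * (of_real r * cis \<theta>) ^ n))\<^sup>2) has_integral J) {0..2*pi}"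
    and "I \<longlonglongrightarrow> J"
    by (rule uniform_limit_integral) auto
  have "I N = 2 * pi * (\<Sum>n<N. (cmod (a n))\<^sup>2 * r ^ (2 * n))" for N
    by (rule has_integral_unique[OF I polynomial_circle_parseval])
  then have "I N / (2 * pi) = (\<Sum>n<N. (cmod (a n))\<^sup>2 * r ^ (2 * n))" for N by simp
  moreover have "(\<lambda>N. I N / (2 * pi)) \<longlonglongrightarrow> J / (2 * pi)"
    using \<open>I \<longlonglongrightarrow> J\<close> by (intro tendsto_divide tendsto_const) auto
  ultimately have sums: "(\<lambda>n. (cmod (a n))\<^sup>2 * r ^ (2 * n)) sums (J / (2 * pi))"
    by (simp add: sums_def)
  then show "summable (\<lambda>n. (cmod (a n))\<^sup>2 * r ^ (2 * n))" by (rule sums_summable)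
  show "((\<lambda>\<theta>. (cmod (\<Sum>n. a n * (of_real r * cis \<theta>) ^ n))\<^sup>2) has_integral
      2 * pi * (\<Sum>n. (cmod (a n))\<^sup>2 * r ^ (2 * n))) {0..2*pi}"
    using J sums_unique[OF sums] by (simp add: field_simps)
qed

lemma continuous_on_compose_circle:
  assumes "continuous_on V u" "continuous_on (ball 0 1) f" "f ` ball 0 1 \<subseteq> V" "0 \<le> r" "r < 1"
  shows "continuous_on A (\<lambda>\<theta>. u (f (of_real r * cis \<theta>)))"
proof -
  have circle: "(\<lambda>\<theta>. of_real r * cis \<theta>) ` A \<subseteq> ball 0 1" using assms(4,5) by (auto simp: norm_mult)
  have "continuous_on A (\<lambda>\<theta>. f (of_real r * cis \<theta>))"
    by (rule continuous_on_compose2[OF assms(2) _ circle]) (intro continuous_intros)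
  then show ?thesis
    by (rule continuous_on_compose2[OF assms(1)]) (use circle assms(3) in auto)
qed

lemma tendsto_zero_at_frontier:
  fixes u U :: "complex \<Rightarrow> real"
  assumes U: "continuous_on (closure V) U" "\<forall>w\<in>V. U w = u w" "\<forall>w\<in>frontier V. U w = 0"
    and g: "(g \<longlongrightarrow> L) F" "L \<in> frontier V" "\<forall>\<^sub>F x in F. g x \<in> V"
  shows "((\<lambda>x. u (g x)) \<longlongrightarrow> 0) F"
proof -
  have "\<forall>\<^sub>F x in F. g x \<in> closure V"
    using g(3) closure_subset by (auto elim!: eventually_mono)
  then have "((\<lambda>x. U (g x)) \<longlongrightarrow> U L) F"
    using g(1,2) by (intro continuous_on_tendsto_compose[OF U(1)]) (auto simp: frontier_def)
  moreover have "\<forall>\<^sub>F x in F. U (g x) = u (g x)"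
    using g(3) U(2) by (auto elim!: eventually_mono)
  ultimately show ?thesis
    using U(3) g(2) by (auto intro: Lim_transform_eventually)
qed

lemma integral_eq_lebesgue_integral_indicator:
  fixes g :: "real \<Rightarrow> real"
  assumes "continuous_on {a..b} g"
  shows "integral {a..b} g = integral\<^sup>L lborel (\<lambda>x. indicator {a..b} x *\<^sub>R g x)"
proof -
  have "set_integrable lborel {a..b} g"
    unfolding set_integrable_def by (rule borel_integrable_compact[OF compact_Icc assms])
  from set_borel_integral_eq_integral(2)[OF this] show ?thesis by (simp add: set_lebesgue_integral_def)
qed

text \<open>Dominated convergence: by B-properness \<open>u \<circ> f\<close> tends to the boundary value \<open>0\<close> along almost
  every radius, and truncation at \<open>K\<close> provides the dominating function.\<close>
lemma circle_integral_min_tendsto_zero: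
  fixes u U :: "complex \<Rightarrow> real" and f :: "complex \<Rightarrow> complex"
  assumes U: "continuous_on (closure V) U" "\<forall>w\<in>V. U w = u w" "\<forall>w\<in>frontier V. U w = 0"
    and u: "\<forall>w\<in>V. 0 \<le> u w" "continuous_on V u"
    and f: "continuous_on (ball 0 1) f" "f ` ball 0 1 \<subseteq> V" and "0 \<le> K"
    and B_proper: "AE \<theta> in lborel. \<theta> \<in> {0..<2*pi} \<longrightarrow>
        (\<exists>L. ((\<lambda>r::real. f (complex_of_real r * cis \<theta>)) \<longlongrightarrow> L) (at_left 1) \<and> L \<in> frontier V)"
  shows "((\<lambda>r. integral {0..2*pi} (\<lambda>\<theta>. min (u (f (of_real r * cis \<theta>))) K)) \<longlongrightarrow> 0) (at_left 1)"
proof (rule tendsto_at_left_sequentially[of 0])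
  fix r :: "nat \<Rightarrow> real" assume r: "\<And>n. r n < 1" "\<And>n. 0 < r n" "r \<longlonglongrightarrow> 1"
  have r_at_left: "filterlim r (at_left 1) sequentially"
    using r by (intro tendsto_imp_filterlim_at_left) auto
  have in_V: "f (of_real (r n) * cis \<theta>) \<in> V" for n \<theta>
    using f(2) r(1,2)[of n] by (auto simp: norm_mult)
  define s where "s = (\<lambda>n \<theta>. indicator {0..2*pi} \<theta> *\<^sub>R min (u (f (of_real (r n) * cis \<theta>))) K)"
  have cont: "continuous_on {0..2*pi} (\<lambda>\<theta>. min (u (f (of_real (r n) * cis \<theta>))) K)" for n
    using r(1,2)[of n] by (intro continuous_on_min continuous_on_const continuous_on_compose_circle[OF u(2) f]) auto
  have "(\<lambda>n. integral\<^sup>L lborel (s n)) \<longlonglongrightarrow> integral\<^sup>L lborel (\<lambda>\<theta>::real. 0::real)"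
  proof (rule integral_dominated_convergence)
    show "s n \<in> borel_measurable lborel" for n
      unfolding s_def using borel_measurable_continuous_on_indicator[OF _ cont] by simp
    show "integrable lborel (\<lambda>\<theta>. indicator {0..2*pi} \<theta> *\<^sub>R K)"
      by (rule borel_integrable_compact[OF compact_Icc continuous_on_const])
    show "AE \<theta> in lborel. norm (s n \<theta>) \<le> indicator {0..2*pi} \<theta> *\<^sub>R K" for n
      using u(1) in_V \<open>0 \<le> K\<close> by (auto simp: s_def indicator_def)
    show "AE \<theta> in lborel. (\<lambda>n. s n \<theta>) \<longlonglongrightarrow> 0"
      using B_proper AE_lborel_singleton[of "2*pi"]
    proof eventually_elim
      case (elim \<theta>)
      show ?case
      proof (cases "\<theta> \<in> {0..2*pi}")
        case True
        then obtain L where L: "((\<lambda>\<rho>::real. f (complex_of_real \<rho> * cis \<theta>)) \<longlongrightarrow> L) (at_left 1)"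
          "L \<in> frontier V"
          using elim by auto
        have "(\<lambda>n. u (f (of_real (r n) * cis \<theta>))) \<longlonglongrightarrow> 0"
          using filterlim_compose[OF L(1) r_at_left] L(2) in_V
          by (intro tendsto_zero_at_frontier[OF U]) (auto simp: o_def)
        then have "(\<lambda>n. min (u (f (of_real (r n) * cis \<theta>))) K) \<longlonglongrightarrow> min 0 K"
          by (intro tendsto_min tendsto_const)
        then show ?thesis using True \<open>0 \<le> K\<close> by (simp add: s_def)
      qed (simp add: s_def)
    qed
  qed simp
  then show "(\<lambda>n. integral {0..2*pi} (\<lambda>\<theta>. min (u (f (of_real (r n) * cis \<theta>))) K)) \<longlonglongrightarrow> 0"
    by (simp add: s_def integral_eq_lebesgue_integral_indicator[OF cont])
qed simp

lemma le_min_add_square: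
  fixes x C B :: real and P T :: complex
  assumes "0 \<le> C" "x \<le> C * (cmod (P + T))\<^sup>2 + C" "cmod P \<le> B"
  shows "x \<le> min x (2 * C * B\<^sup>2 + C) + 2 * C * (cmod T)\<^sup>2"
proof -
  have "cmod (P + T) \<le> cmod T + B" using assms(3) norm_triangle_ineq[of P T] by simp
  then have "(cmod (P + T))\<^sup>2 \<le> (cmod T + B)\<^sup>2" by (intro power_mono) auto
  also have "\<dots> \<le> 2 * (cmod T)\<^sup>2 + 2 * B\<^sup>2"
    using sum_squares_ge_zero[of "cmod T - B" 0] by (simp add: power2_eq_square algebra_simps)
  finally have "x \<le> C * (2 * (cmod T)\<^sup>2 + 2 * B\<^sup>2) + C"
    using assms(1,2) by (meson add_right_mono mult_left_mono order_trans)
  then show ?thesis using assms(1) by (simp add: min_def algebra_simps)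
qed

lemma le_truncation_plus_tail:
  fixes c :: "nat \<Rightarrow> complex" and u :: "complex \<Rightarrow> real"
  assumes series: "\<And>z. z \<in> ball 0 1 \<Longrightarrow> (\<lambda>n. c n * z ^ n) sums f z"
    and "f ` ball 0 1 \<subseteq> V" "0 \<le> C" "\<forall>w\<in>V. u w \<le> C * (cmod w)\<^sup>2 + C" "z \<in> ball 0 1"
  shows "u (f z) \<le> min (u (f z)) (2 * C * (\<Sum>n<N. cmod (c n))\<^sup>2 + C)
    + 2 * C * (cmod (\<Sum>n. (if n < N then 0 else c n) * z ^ n))\<^sup>2"
proof -
  define d where "d = (\<lambda>n. if n < N then 0 else c n)"
  have sc: "summable (\<lambda>n. c n * z ^ n)" and fz: "f z = (\<Sum>n. c n * z ^ n)"
    using series[OF \<open>z \<in> ball 0 1\<close>] by (simp_all add: sums_iff)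
  have "\<forall>\<^sub>F n in sequentially. d n * z ^ n = c n * z ^ n"
    unfolding eventually_sequentially by (intro exI[of _ N]) (simp add: d_def)
  from summable_cong[OF this] sc have sd: "summable (\<lambda>n. d n * z ^ n)" by simp
  have "(\<Sum>n<N. d n * z ^ n) = 0" "(\<lambda>n. d (n + N) * z ^ (n + N)) = (\<lambda>n. c (n + N) * z ^ (n + N))"
    by (simp_all add: d_def)
  then have split: "f z = (\<Sum>n<N. c n * z ^ n) + (\<Sum>n. d n * z ^ n)"
    using fz suminf_split_initial_segment[OF sc, of N] suminf_split_initial_segment[OF sd, of N]
    by simp
  have head: "cmod (\<Sum>n<N. c n * z ^ n) \<le> (\<Sum>n<N. cmod (c n))"
  proof (rule order_trans[OF norm_sum sum_mono])
    fix n
    have "norm z ^ n \<le> 1" using \<open>z \<in> ball 0 1\<close> by (simp add: power_le_one)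
    then show "norm (c n * z ^ n) \<le> cmod (c n)"
      by (simp add: norm_mult norm_power mult_left_le)
  qed
  have "f z \<in> V" using assms(2) \<open>z \<in> ball 0 1\<close> by blast
  then have "u (f z) \<le> C * (cmod ((\<Sum>n<N. c n * z ^ n) + (\<Sum>n. d n * z ^ n)))\<^sup>2 + C"
    using assms(4) split by simp
  from le_min_add_square[OF \<open>0 \<le> C\<close> this head] show ?thesis unfolding d_def .
qed

lemma power_series_tail_circle_parseval:
  fixes c :: "nat \<Rightarrow> complex"
  assumes "0 \<le> r" "r \<le> 1" "summable (\<lambda>n. norm (c n) * r ^ n)" "summable (\<lambda>n. (cmod (c n))\<^sup>2)"
  obtains I where "((\<lambda>\<theta>. (cmod (\<Sum>n. (if n < N then 0 else c n) * (of_real r * cis \<theta>) ^ n))\<^sup>2)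
      has_integral I) {0..2*pi}"
    and "I \<le> 2 * pi * (\<Sum>n. (cmod (c (n + N)))\<^sup>2)"
proof -
  define d where "d = (\<lambda>n. if n < N then 0 else c n)"
  have "summable (\<lambda>n. norm (d n) * r ^ n)"
    by (rule summable_comparison_test[OF _ assms(3)]) (use assms(1) in \<open>auto simp: d_def\<close>)
  note parseval = power_series_circle_parseval[OF assms(1) this]
  have "norm ((cmod (d n))\<^sup>2) \<le> (cmod (c n))\<^sup>2" for n
    by (simp add: d_def)
  then have summable_d2: "summable (\<lambda>n. (cmod (d n))\<^sup>2)"
    by (intro summable_comparison_test'[OF assms(4), where N=0])
  have "(cmod (d n))\<^sup>2 * r ^ (2 * n) \<le> (cmod (d n))\<^sup>2" for n
    by (rule mult_left_le) (use assms(1,2) in \<open>simp_all add: power_le_one\<close>)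
  then have "(\<Sum>n. (cmod (d n))\<^sup>2 * r ^ (2 * n)) \<le> (\<Sum>n. (cmod (d n))\<^sup>2)"
    by (rule suminf_le[OF _ parseval(1) summable_d2])
  also have "\<dots> = (\<Sum>n. (cmod (d (n + N)))\<^sup>2) + (\<Sum>n<N. (cmod (d n))\<^sup>2)"
    by (rule suminf_split_initial_segment[OF summable_d2])
  also have "(\<Sum>n<N. (cmod (d n))\<^sup>2) = 0"
    by (simp add: d_def)
  also have "(\<lambda>n. (cmod (d (n + N)))\<^sup>2) = (\<lambda>n. (cmod (c (n + N)))\<^sup>2)"
    by (simp add: d_def)
  finally have "2 * pi * (\<Sum>n. (cmod (d n))\<^sup>2 * r ^ (2 * n)) \<le> 2 * pi * (\<Sum>n. (cmod (c (n + N)))\<^sup>2)"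
    by simp
  with parseval(2) show thesis unfolding d_def by (rule that)
qed

lemma circle_integral_le_truncated:
  fixes c :: "nat \<Rightarrow> complex" and u :: "complex \<Rightarrow> real"
  assumes series: "\<And>z. z \<in> ball 0 1 \<Longrightarrow> (\<lambda>n. c n * z ^ n) sums f z"
    and "f ` ball 0 1 \<subseteq> V" "continuous_on V u" "0 \<le> C" "\<forall>w\<in>V. u w \<le> C * (cmod w)\<^sup>2 + C"
    and "summable (\<lambda>n. (cmod (c n))\<^sup>2)" "0 \<le> r" "r < 1"
  shows "integral {0..2*pi} (\<lambda>\<theta>. u (f (of_real r * cis \<theta>)))
    \<le> integral {0..2*pi} (\<lambda>\<theta>. min (u (f (of_real r * cis \<theta>))) (2 * C * (\<Sum>n<N. cmod (c n))\<^sup>2 + C))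
      + 4 * pi * C * (\<Sum>n. (cmod (c (n + N)))\<^sup>2)"
proof -
  define K where "K = 2 * C * (\<Sum>n<N. cmod (c n))\<^sup>2 + C"
  define T where "T = (\<lambda>\<theta>. \<Sum>n. (if n < N then 0 else c n) * (of_real r * cis \<theta>) ^ n)"
  have "f holomorphic_on ball 0 1"
    by (rule power_series_holomorphic[where a=c]) (use series in simp)
  then have cont: "continuous_on {0..2*pi} (\<lambda>\<theta>. u (f (of_real r * cis \<theta>)))"
    by (intro continuous_on_compose_circle[OF assms(3) _ assms(2,7,8)] holomorphic_on_imp_continuous_on)
  obtain I where I: "((\<lambda>\<theta>. (cmod (T \<theta>))\<^sup>2) has_integral I) {0..2*pi}"
    and I_le: "I \<le> 2 * pi * (\<Sum>n. (cmod (c (n + N)))\<^sup>2)"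
    using power_series_tail_circle_parseval[OF assms(7) _ summable_norm_power_series_disc[OF series assms(7,8)]
        assms(6), of N] assms(8) unfolding T_def by auto
  have "((\<lambda>\<theta>. min (u (f (of_real r * cis \<theta>))) K + 2 * C * (cmod (T \<theta>))\<^sup>2) has_integral
      integral {0..2*pi} (\<lambda>\<theta>. min (u (f (of_real r * cis \<theta>))) K) + 2 * C * I) {0..2*pi}"
    using cont by (intro has_integral_add has_integral_mult_right I integrable_integral
        integrable_continuous_interval continuous_on_min continuous_on_const)
  moreover have "u (f (of_real r * cis \<theta>)) \<le> min (u (f (of_real r * cis \<theta>))) K + 2 * C * (cmod (T \<theta>))\<^sup>2"
    for \<theta>
  proof -
    have "of_real r * cis \<theta> \<in> ball 0 1" using assms(7,8) by (simp add: norm_mult)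
    from le_truncation_plus_tail[OF series assms(2,4,5) this] show ?thesis unfolding K_def T_def .
  qed
  ultimately have "integral {0..2*pi} (\<lambda>\<theta>. u (f (of_real r * cis \<theta>)))
      \<le> integral {0..2*pi} (\<lambda>\<theta>. min (u (f (of_real r * cis \<theta>))) K) + 2 * C * I"
    by (intro has_integral_le[OF integrable_integral[OF integrable_continuous_interval[OF cont]]])
  also have "\<dots> \<le> integral {0..2*pi} (\<lambda>\<theta>. min (u (f (of_real r * cis \<theta>))) K)
        + 4 * pi * C * (\<Sum>n. (cmod (c (n + N)))\<^sup>2)"
    using mult_left_mono[OF I_le, of "2 * C"] \<open>0 \<le> C\<close> by (simp add: mult_ac)
  finally show ?thesis by (simp add: K_def)
qed

lemma circle_integral_tendsto_zero:
  fixes c :: "nat \<Rightarrow> complex" and u U :: "complex \<Rightarrow> real"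
  assumes series: "\<And>z. z \<in> ball 0 1 \<Longrightarrow> (\<lambda>n. c n * z ^ n) sums f z"
    and into: "f ` ball 0 1 \<subseteq> V"
    and B_proper: "AE \<theta> in lborel. \<theta> \<in> {0..<2*pi} \<longrightarrow>
        (\<exists>L. ((\<lambda>r::real. f (complex_of_real r * cis \<theta>)) \<longlongrightarrow> L) (at_left 1) \<and> L \<in> frontier V)"
    and u_cont: "continuous_on V u"
    and U: "continuous_on (closure V) U" "\<forall>w\<in>V. U w = u w" "\<forall>w\<in>frontier V. U w = 0"
    and C: "0 \<le> C" "\<forall>w\<in>V. 0 \<le> u w \<and> u w \<le> C * (cmod w)\<^sup>2 + C"
    and summable: "summable (\<lambda>n. (cmod (c n))\<^sup>2)"
  shows "((\<lambda>r. integral {0..2*pi} (\<lambda>\<theta>. u (f (of_real r * cis \<theta>)))) \<longlongrightarrow> 0) (at_left 1)"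
proof (rule tendstoI)
  fix \<epsilon> :: real assume "\<epsilon> > 0"
  have "(\<lambda>N. 4 * pi * C * (\<Sum>n. (cmod (c (n + N)))\<^sup>2)) \<longlonglongrightarrow> 4 * pi * C * 0"
    by (intro tendsto_mult_left suminf_exist_split2 summable)
  then have "\<forall>\<^sub>F N in sequentially. 4 * pi * C * (\<Sum>n. (cmod (c (n + N)))\<^sup>2) < \<epsilon> / 2"
    using \<open>\<epsilon> > 0\<close> by (intro order_tendstoD(2)) auto
  then obtain N where N: "4 * pi * C * (\<Sum>n. (cmod (c (n + N)))\<^sup>2) < \<epsilon> / 2"
    unfolding eventually_sequentially by blast
  define K where "K = 2 * C * (\<Sum>n<N. cmod (c n))\<^sup>2 + C"
  have "f holomorphic_on ball 0 1"
    by (rule power_series_holomorphic[where a=c]) (use series in simp)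
  then have contf: "continuous_on (ball 0 1) f" by (rule holomorphic_on_imp_continuous_on)
  then have "((\<lambda>r. integral {0..2*pi} (\<lambda>\<theta>. min (u (f (of_real r * cis \<theta>))) K)) \<longlongrightarrow> 0) (at_left 1)"
    using C by (intro circle_integral_min_tendsto_zero[OF U _ u_cont contf into _ B_proper])
      (auto simp: K_def)
  from order_tendstoD(2)[OF this half_gt_zero[OF \<open>\<epsilon> > 0\<close>]]
  have "\<forall>\<^sub>F r in at_left 1. integral {0..2*pi} (\<lambda>\<theta>. min (u (f (of_real r * cis \<theta>))) K) < \<epsilon> / 2" .
  with eventually_at_left_real[OF zero_less_one]
  show "\<forall>\<^sub>F r in at_left 1. dist (integral {0..2*pi} (\<lambda>\<theta>. u (f (of_real r * cis \<theta>)))) 0 < \<epsilon>"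
  proof eventually_elim
    case (elim r)
    then have r: "0 \<le> r" "r < 1" by auto
    have "0 \<le> integral {0..2*pi} (\<lambda>\<theta>. u (f (of_real r * cis \<theta>)))"
      using C(2) into r
      by (intro integral_nonneg integrable_continuous_interval continuous_on_compose_circle[OF u_cont contf into r])
        (auto simp: norm_mult image_subset_iff)
    moreover have "integral {0..2*pi} (\<lambda>\<theta>. u (f (of_real r * cis \<theta>)))
        \<le> integral {0..2*pi} (\<lambda>\<theta>. min (u (f (of_real r * cis \<theta>))) K) + 4 * pi * C * (\<Sum>n. (cmod (c (n + N)))\<^sup>2)"
      unfolding K_def using C by (intro circle_integral_le_truncated[OF series into u_cont _ _ summable r]) auto
    ultimately show ?case using elim N by simp
  qed
qed

lemma nonneg_series_weighted_suminf_bound: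
  fixes p :: "nat \<Rightarrow> real" and w :: "nat \<Rightarrow> 'a \<Rightarrow> real"
  assumes p: "\<And>n. 0 \<le> p n" and "\<And>n. (w n \<longlongrightarrow> 1) F" "F \<noteq> bot"
    and weighted: "\<forall>\<^sub>F x in F. (\<forall>n. 0 \<le> w n x \<and> w n x \<le> 1) \<and> summable (\<lambda>n. p n * w n x)
      \<and> (\<Sum>n. p n * w n x) \<le> M"
  shows "summable p" "suminf p \<le> M"
    and "((\<lambda>x. \<Sum>n. p n * w n x) \<longlongrightarrow> M) F \<Longrightarrow> p sums M"
proof -
  have "(\<Sum>n<N. p n) \<le> M" for N
  proof (rule tendsto_upperbound)
    have "((\<lambda>x. \<Sum>n<N. p n * w n x) \<longlongrightarrow> (\<Sum>n<N. p n * 1)) F"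
      by (rule tendsto_sum) (rule tendsto_mult_left[OF assms(2)])
    then show "((\<lambda>x. \<Sum>n<N. p n * w n x) \<longlongrightarrow> (\<Sum>n<N. p n)) F" by simp
    show "\<forall>\<^sub>F x in F. (\<Sum>n<N. p n * w n x) \<le> M"
      using weighted
    proof eventually_elim
      case (elim x)
      then have "(\<Sum>n<N. p n * w n x) \<le> (\<Sum>n. p n * w n x)"
        using p by (intro sum_le_suminf) auto
      with elim show ?case by linarith
    qed
  qed (use assms(3) in simp)
  then show "summable p" by (rule summableI_nonneg_bounded[OF p])
  then show "suminf p \<le> M" by (rule suminf_le_const) fact
  assume "((\<lambda>x. \<Sum>n. p n * w n x) \<longlongrightarrow> M) F"
  then have "M \<le> suminf p"
  proof (rule tendsto_upperbound)
    show "\<forall>\<^sub>F x in F. (\<Sum>n. p n * w n x) \<le> suminf p"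
      using weighted
    proof eventually_elim
      case (elim x)
      have "p n * w n x \<le> p n" for n
        using elim p by (intro mult_left_le) auto
      then show ?case using elim \<open>summable p\<close> by (intro suminf_le) auto
    qed
  qed (use assms(3) in simp)
  with \<open>summable p\<close> \<open>suminf p \<le> M\<close> show "p sums M" by (simp add: sums_iff)
qed

lemma nonneg_series_radial_bound:
  fixes q :: "nat \<Rightarrow> real"
  assumes "\<And>n. 0 \<le> q n"
    and "\<And>r. 0 < r \<Longrightarrow> r < 1 \<Longrightarrow> summable (\<lambda>n. q n * r ^ (2 * n)) \<and> (\<Sum>n. q n * r ^ (2 * n)) \<le> M"
  shows "summable q"
    and "((\<lambda>r. \<Sum>n. q n * r ^ (2 * n)) \<longlongrightarrow> M) (at_left 1) \<Longrightarrow> q sums M"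
proof -
  have "((\<lambda>r::real. r ^ (2 * n)) \<longlongrightarrow> 1 ^ (2 * n)) (at_left 1)" for n
    by (intro tendsto_power tendsto_ident_at)
  then have weights: "((\<lambda>r::real. r ^ (2 * n)) \<longlongrightarrow> 1) (at_left 1)" for n by simp
  have "\<forall>\<^sub>F r in at_left 1. (\<forall>n. 0 \<le> r ^ (2 * n) \<and> r ^ (2 * n) \<le> 1) \<and> summable (\<lambda>n. q n * r ^ (2 * n))
      \<and> (\<Sum>n. q n * r ^ (2 * n)) \<le> M"
    using eventually_at_left_real[OF zero_less_one]
  proof eventually_elim
    case (elim r)
    then have "0 \<le> r ^ (2 * n) \<and> r ^ (2 * n) \<le> 1" for n by (simp add: power_le_one)
    with elim assms(2)[of r] show ?case by simp
  qed
  note weighted = nonneg_series_weighted_suminf_bound[where w="\<lambda>n r. r ^ (2 * n)",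
      OF assms(1) weights trivial_limit_at_left_real this]
  show "summable q" by (fact weighted(1))
  show "((\<lambda>r. \<Sum>n. q n * r ^ (2 * n)) \<longlongrightarrow> M) (at_left 1) \<Longrightarrow> q sums M" by (fact weighted(3))
qed

lemma tendsto_if_scaled_difference_tendsto_zero:
  fixes I Q :: "'a \<Rightarrow> real"
  assumes "(I \<longlongrightarrow> 0) F" "\<forall>\<^sub>F x in F. I x = a * (L - Q x)" "a \<noteq> 0"
  shows "(Q \<longlongrightarrow> L) F"
proof -
  have "((\<lambda>x. L - I x / a) \<longlongrightarrow> L - 0 / a) F"
    by (intro tendsto_diff tendsto_divide tendsto_const assms(1,3))
  moreover have "\<forall>\<^sub>F x in F. L - I x / a = Q x"
    using assms(2) by eventually_elim (use assms(3) in simp)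
  ultimately show ?thesis by (simp add: Lim_transform_eventually)
qed

lemma has_integral_circle_compose:
  fixes c :: "nat \<Rightarrow> complex" and u :: "complex \<Rightarrow> real"
  assumes series: "\<And>z. z \<in> ball 0 1 \<Longrightarrow> (\<lambda>n. c n * z ^ n) sums f z"
    and "f ` ball 0 1 \<subseteq> V" "open V" "C2_on V u" "\<And>w. w \<in> V \<Longrightarrow> laplacian u w = -4"
    and r: "0 \<le> r" "r < 1"
  shows "summable (\<lambda>n. (cmod (c n))\<^sup>2 * r ^ (2 * n))"
    and "((\<lambda>\<theta>. u (f (of_real r * cis \<theta>))) has_integral
          2 * pi * (u (c 0) + (cmod (c 0))\<^sup>2 - (\<Sum>n. (cmod (c n))\<^sup>2 * r ^ (2 * n)))) {0..2*pi}"
proof -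
  have "f holomorphic_on ball 0 1"
    by (rule power_series_holomorphic[where a=c]) (use series in simp)
  then obtain G k where G: "G holomorphic_on ball 0 1"
    "\<And>z. z \<in> ball 0 1 \<Longrightarrow> u (f z) + (cmod (f z))\<^sup>2 = Re (G z) + k"
    using exists_holomorphic_real_part_plus_norm_power2[OF convex_ball open_ball _ assms(2-5)] by blast
  have circle: "of_real r * cis \<theta> \<in> ball 0 1" for \<theta> using r by (simp add: norm_mult)
  have "f 0 = c 0" using series[of 0] powser_sums_zero[of c] sums_unique2 by auto
  have "cball 0 r \<subseteq> ball 0 1" using r by auto
  from has_integral_Re[OF holomorphic_circle_mean[OF holomorphic_on_subset[OF G(1) this] r(1)]]
  have "((\<lambda>\<theta>. Re (G (of_real r * cis \<theta>))) has_integral 2 * pi * Re (G 0)) {0..2*pi}"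
    by simp
  from has_integral_add[OF this has_integral_const_real[of k 0 "2 * pi"]]
  have "((\<lambda>\<theta>. Re (G (of_real r * cis \<theta>)) + k) has_integral 2 * pi * (Re (G 0) + k)) {0..2*pi}"
    by (simp add: distrib_left)
  moreover have "Re (G 0) + k = u (c 0) + (cmod (c 0))\<^sup>2"
    using G(2)[of 0] \<open>f 0 = c 0\<close> by simp
  ultimately have mean: "((\<lambda>\<theta>. u (f (of_real r * cis \<theta>)) + (cmod (f (of_real r * cis \<theta>)))\<^sup>2) has_integral
      2 * pi * (u (c 0) + (cmod (c 0))\<^sup>2)) {0..2*pi}"
    by (simp only: G(2)[OF circle])
  note parseval = power_series_circle_parseval[OF r(1) summable_norm_power_series_disc[OF series r]]
  then show "summable (\<lambda>n. (cmod (c n))\<^sup>2 * r ^ (2 * n))" by blast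
  have "f (of_real r * cis \<theta>) = (\<Sum>n. c n * (of_real r * cis \<theta>) ^ n)" for \<theta>
    using series[OF circle] by (simp add: sums_iff)
  with has_integral_diff[OF mean parseval(2)]
  show "((\<lambda>\<theta>. u (f (of_real r * cis \<theta>))) has_integral
      2 * pi * (u (c 0) + (cmod (c 0))\<^sup>2 - (\<Sum>n. (cmod (c n))\<^sup>2 * r ^ (2 * n)))) {0..2*pi}"
    by (simp add: right_diff_distrib)
qed

theorem proposition3:
  fixes V :: "complex set" and c :: "nat \<Rightarrow> complex" and f :: "complex \<Rightarrow> complex"
    and u :: "complex \<Rightarrow> real"
  assumes domain: "open V" "connected V" "V \<noteq> {}" "V \<noteq> UNIV"
    and series: "\<And>z. z \<in> ball 0 1 \<Longrightarrow> (\<lambda>n. c n * z ^ n) sums f z"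
    and into: "f ` ball 0 1 \<subseteq> V"
    and B_proper: "AE \<theta> in lborel. \<theta> \<in> {0..<2*pi} \<longrightarrow>
        (\<exists>L. ((\<lambda>r::real. f (complex_of_real r * cis \<theta>)) \<longlongrightarrow> L) (at_left 1) \<and> L \<in> frontier V)"
    and u_cont: "continuous_on V u"
    and u_C2: "C2_on V u"
    and u_lap: "\<And>w. w \<in> V \<Longrightarrow> laplacian u w = -4"
    and u_bdry: "\<exists>U. continuous_on (closure V) U \<and> (\<forall>w\<in>V. U w = u w) \<and> (\<forall>w\<in>frontier V. U w = 0)"
    and u_bound: "\<exists>C>0. \<forall>w\<in>V. 0 \<le> u w \<and> u w \<le> C * (cmod w)\<^sup>2 + C"
  shows "(\<lambda>n. (cmod (c (Suc n)))\<^sup>2) sums u (c 0)"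
proof -
  obtain C where C: "C > 0" "\<forall>w\<in>V. 0 \<le> u w \<and> u w \<le> C * (cmod w)\<^sup>2 + C" using u_bound by blast
  obtain U where U: "continuous_on (closure V) U" "\<forall>w\<in>V. U w = u w" "\<forall>w\<in>frontier V. U w = 0"
    using u_bdry by blast
  define q where "q = (\<lambda>n. (cmod (c n))\<^sup>2)"
  have circle: "summable (\<lambda>n. q n * r ^ (2 * n))"
      "((\<lambda>\<theta>. u (f (of_real r * cis \<theta>))) has_integral 2 * pi * (u (c 0) + q 0 - (\<Sum>n. q n * r ^ (2 * n))))
        {0..2*pi}"
    if "0 \<le> r" "r < 1" for r
    using has_integral_circle_compose[OF series into domain(1) u_C2 u_lap that] by (simp_all add: q_def)
  have "summable (\<lambda>n. q n * r ^ (2 * n)) \<and> (\<Sum>n. q n * r ^ (2 * n)) \<le> u (c 0) + q 0"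
    if "0 < r" "r < 1" for r
  proof -
    have "0 \<le> 2 * pi * (u (c 0) + q 0 - (\<Sum>n. q n * r ^ (2 * n)))"
      using C(2) into that by (intro has_integral_nonneg[OF circle(2)]) (auto simp: norm_mult image_subset_iff)
    then show ?thesis using circle(1) that pi_gt_zero by (simp add: zero_le_mult_iff)
  qed
  moreover have "0 \<le> q n" for n by (simp add: q_def)
  ultimately have radial: "summable q" "((\<lambda>r. \<Sum>n. q n * r ^ (2 * n)) \<longlongrightarrow> u (c 0) + q 0) (at_left 1) \<Longrightarrow>
      q sums (u (c 0) + q 0)"
    using nonneg_series_radial_bound[of q "u (c 0) + q 0"] by blast+
  have "((\<lambda>r. integral {0..2*pi} (\<lambda>\<theta>. u (f (of_real r * cis \<theta>)))) \<longlongrightarrow> 0) (at_left 1)"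
    using radial(1) C unfolding q_def
    by (intro circle_integral_tendsto_zero[OF series into B_proper u_cont U, of C]) auto
  moreover have "\<forall>\<^sub>F r in at_left 1.
      integral {0..2*pi} (\<lambda>\<theta>. u (f (of_real r * cis \<theta>))) = 2 * pi * (u (c 0) + q 0 - (\<Sum>n. q n * r ^ (2 * n)))"
    using eventually_at_left_real[OF zero_less_one]
    by eventually_elim (simp add: integral_unique[OF circle(2)])
  ultimately have "((\<lambda>r. \<Sum>n. q n * r ^ (2 * n)) \<longlongrightarrow> u (c 0) + q 0) (at_left 1)"
    by (rule tendsto_if_scaled_difference_tendsto_zero) simp
  then have "q sums (u (c 0) + q 0)" by (rule radial(2))
  then show ?thesis using sums_Suc_iff[of q "u (c 0)"] by (simp add: q_def)
qed

end
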